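(* Let the universe be $\mathbb{Z}$ and let $\mathcal{C}$ be the collection consisting of the languages $\{1,2,\ldots,100\}\cup\mathbb{Z}_{\ge i}$ for all $i\in\mathbb{Z}$, where $\mathbb{Z}_{\ge i}=\{i,i+1,i+2,\ldots\}$. There is no algorithm that non-uniformly generates from $\mathcal{C}$ and whose generation times form a Pareto-optimal sequence.
   Context: Index the languages of $\mathcal{C}$ as $L_1,L_2,\ldots$ by any enumeration without repetition. An enumeration of a language $L$ is a sequence $x_1,x_2,\ldots$ with every $x_t\in L$ and every $x\in L$ equal to some $x_t$. A generating algorithm at each time $t\ge1$ receives $x_1,\ldots,x_t$ and outputs $z_t$; $S_t$ is the set of distinct strings among $x_1,\ldots,x_t$. An algorithm $\mathcal{G}$ non-uniformly generates from $\mathcal{C}$ if for every $i$ there is a finite $t(L_i)$ such that for every enumeration of $L_i$, $z_t\in L_i\setminus S_t$ whenever $|S_t|\ge t(L_i)$; its generation time $t_{\mathcal{G}}(L_i)$ is the least such value ($\infty$ if none). A sequence $t(L_1),t(L_2),\ldots$ is Pareto-optimal if every algorithm $\mathcal{G}$ that non-uniformly generates from $\mathcal{C}$ and satisfies $t_{\mathcal{G}}(L_i)<t(L_i)$ for some $i$ also satisfies $t_{\mathcal{G}}(L_j)>t(L_j)$ for some other $j$. *)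

theory Defs
  imports Main "HOL-Library.Extended_Nat"
begin

text \<open>An algorithm maps the finite prefix x_1,...,x_t (a list of length t) to its output z_t.
  A sequence x (indexed from 0, so x_t of the paper is x (t-1)) enumerates L iff its range is L.\<close>

definition enumerates :: "(nat \<Rightarrow> 'a) \<Rightarrow> 'a set \<Rightarrow> bool" where
  "enumerates x L \<longleftrightarrow> range x = L"

definition prefix :: "(nat \<Rightarrow> 'a) \<Rightarrow> nat \<Rightarrow> 'a list" where
  "prefix x t = map x [0..<t]"

definition gen_bound :: "('a list \<Rightarrow> 'a) \<Rightarrow> 'a set \<Rightarrow> nat \<Rightarrow> bool" where
  "gen_bound G L n \<longleftrightarrow>
     (\<forall>x. enumerates x L \<longrightarrow>
        (\<forall>t\<ge>1. card (set (prefix x t)) \<ge> n \<longrightarrow>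
           G (prefix x t) \<in> L - set (prefix x t)))"

definition gen_time :: "('a list \<Rightarrow> 'a) \<Rightarrow> 'a set \<Rightarrow> enat" where
  "gen_time G L = (if \<exists>n. gen_bound G L n then enat (LEAST n. gen_bound G L n) else \<infinity>)"

definition nonuniform_generates :: "'a set set \<Rightarrow> ('a list \<Rightarrow> 'a) \<Rightarrow> bool" where
  "nonuniform_generates C G \<longleftrightarrow> (\<forall>L\<in>C. gen_time G L \<noteq> \<infinity>)"

definition pareto_optimal :: "'a set set \<Rightarrow> ('a set \<Rightarrow> enat) \<Rightarrow> bool" where
  "pareto_optimal C tt \<longleftrightarrow>
     (\<forall>G. nonuniform_generates C G \<and> (\<exists>L\<in>C. gen_time G L < tt L)
          \<longrightarrow> (\<exists>L'\<in>C. gen_time G L' > tt L'))"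

definition C5 :: "int set set" where
  "C5 = range (\<lambda>i::int. {1..100} \<union> {i..})"

end

theory Submission
  imports Defs "HOL-Library.Countable_Set"
begin

text \<open>Let z be the output of G on the enumeration prefix 1, ..., 100 and fix w > max z 100.
  The generator that answers w on the sample {1..100}, the least missing number on a proper
  subset of it, and max S + 1 on any other sample S needs at most 101 distinct strings on every
  language L = {1..100} \<union> {i..}, and none if i \<le> w.  If z \<notin> L - {1..100}, the enumeration
  of L starting with 1, ..., 100 shows that G needs at least 101 strings on L; otherwise
  i \<le> z < w.  So this generator is never slower than G, and strictly faster on {1..100} \<union> {w..}.\<close>

declare upto_rec_numeral [simp del]  \<comment> \<open>keeps simp from unfolding [1..100] into 100 conses\<close>

lemma gen_time_le_enat: "gen_bound G L n \<Longrightarrow> gen_time G L \<le> enat n"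
  unfolding gen_time_def by (auto intro: Least_le)

lemma enat_le_gen_time: "(\<And>n. n < m \<Longrightarrow> \<not> gen_bound G L n) \<Longrightarrow> enat m \<le> gen_time G L"
  unfolding gen_time_def by (auto intro: LeastI2 simp: not_less[symmetric])

lemma not_pareto_optimal_if_strictly_dominated:
  assumes "nonuniform_generates C A" and "\<And>L. L \<in> C \<Longrightarrow> gen_time A L \<le> tt L"
    and "L \<in> C" and "gen_time A L < tt L"
  shows "\<not> pareto_optimal C tt"
  using assms unfolding pareto_optimal_def by (meson not_le)

lemma prefix_subset: "enumerates x L \<Longrightarrow> set (prefix x t) \<subseteq> L"
  unfolding enumerates_def prefix_def by auto

lemma enumeration_with_prefix:
  assumes "countable L" and "L \<noteq> {}" and "set p \<subseteq> L"
  obtains x where "enumerates x L" and "prefix x (length p) = p"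
proof
  define x where "x k = (if k < length p then p ! k else from_nat_into L (k - length p))" for k
  have "range x \<subseteq> L"
    using assms(3) from_nat_into[OF assms(2)] by (auto simp: x_def)
  moreover have "y \<in> range x" if "y \<in> L" for y
  proof -
    obtain n where "y = from_nat_into L n"
      using \<open>y \<in> L\<close> range_from_nat_into[OF assms(2,1)] by blast
    then have "y = x (n + length p)" by (simp add: x_def)
    then show ?thesis by blast
  qed
  ultimately show "enumerates x L"
    unfolding enumerates_def by blast
  show "prefix x (length p) = p"
    unfolding prefix_def by (rule nth_equalityI) (simp_all add: x_def)
qed

lemma card_less_gen_time_if_fails_on:
  assumes "countable L" and "set p \<subseteq> L" and "p \<noteq> []" and "G p \<notin> L - set p"
  shows "enat (Suc (card (set p))) \<le> gen_time G L"
proof (rule enat_le_gen_time)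
  fix n assume "n < Suc (card (set p))"
  obtain x where x: "enumerates x L" "prefix x (length p) = p"
    using enumeration_with_prefix assms(1,2,3) by (metis set_empty subset_empty)
  show "\<not> gen_bound G L n"
  proof
    assume "gen_bound G L n"
    moreover have "1 \<le> length p" "n \<le> card (set p)"
      using assms(3) \<open>n < Suc (card (set p))\<close> by (simp_all add: Suc_leI)
    ultimately have "G p \<in> L - set p"
      unfolding gen_bound_def using x by metis
    with assms(4) show False ..
  qed
qed

definition gen_C5 :: "int \<Rightarrow> int list \<Rightarrow> int" where
  "gen_C5 w p =
    (if set p = {1..100} then w
     else if set p \<subseteq> {1..100} then Min ({1..100} - set p)
     else Max (set p) + 1)"

lemma gen_C5_fresh:
  assumes "set p \<subseteq> {1..100} \<union> {i..}" and "101 \<le> card (set p) \<or> (i \<le> w \<and> 101 \<le> w)"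
  shows "gen_C5 w p \<in> ({1..100} \<union> {i..}) - set p"
proof -
  consider "set p = {1..100}" | "set p \<subset> {1..100}" | "\<not> set p \<subseteq> {1..100}"
    by blast
  then show ?thesis
  proof cases
    case 1
    then have "i \<le> w \<and> 101 \<le> w" using assms(2) by simp
    with 1 show ?thesis by (simp add: gen_C5_def)
  next
    case 2
    then have "{1..100} - set p \<noteq> {}" by blast
    then have "Min ({1..100} - set p) \<in> {1..100} - set p" by (intro Min_in) auto
    moreover have "gen_C5 w p = Min ({1..100} - set p)"
      using 2 unfolding gen_C5_def by (simp only: psubset_eq if_False if_True)
    ultimately show ?thesis by auto
  next
    case 3
    then obtain s where s: "s \<in> set p" "s \<notin> {1..100}" by blast
    then have "i \<le> s" "s \<le> Max (set p)" using assms(1) by auto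
    moreover have "Max (set p) + 1 \<notin> set p"
      using Max_ge[of "set p" "Max (set p) + 1"] by fastforce
    moreover have "gen_C5 w p = Max (set p) + 1"
      using 3 by (auto simp: gen_C5_def)
    ultimately show ?thesis by simp
  qed
qed

lemma gen_bound_gen_C5:
  assumes "101 \<le> n \<or> (i \<le> w \<and> 101 \<le> w)"
  shows "gen_bound (gen_C5 w) ({1..100} \<union> {i..}) n"
  unfolding gen_bound_def
proof (intro allI impI)
  fix x t assume "enumerates x ({1..100} \<union> {i..})" and "n \<le> card (set (prefix x t))"
  then show "gen_C5 w (prefix x t) \<in> ({1..100} \<union> {i..}) - set (prefix x t)"
    using assms by (intro gen_C5_fresh prefix_subset) auto
qed

lemma gen_time_gen_C5_le_101: "gen_time (gen_C5 w) ({1..100} \<union> {i..}) \<le> 101"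
proof -
  have "gen_time (gen_C5 w) ({1..100} \<union> {i..}) \<le> enat 101"
    by (intro gen_time_le_enat gen_bound_gen_C5) simp
  then show ?thesis by (simp add: numeral_eq_enat)
qed

lemma gen_time_gen_C5_eq_0:
  assumes "i \<le> w" and "101 \<le> w"
  shows "gen_time (gen_C5 w) ({1..100} \<union> {i..}) = 0"
proof -
  have "gen_time (gen_C5 w) ({1..100} \<union> {i..}) \<le> enat 0"
    using assms by (intro gen_time_le_enat gen_bound_gen_C5) simp
  then show ?thesis by (simp add: zero_enat_def[symmetric])
qed

lemma nonuniform_generates_gen_C5: "nonuniform_generates C5 (gen_C5 w)"
  unfolding nonuniform_generates_def C5_def
proof
  fix L assume "L \<in> range (\<lambda>i::int. {1..100} \<union> {i..})"
  then obtain i where "L = {1..100} \<union> {i..}" by blast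
  then show "gen_time (gen_C5 w) L \<noteq> \<infinity>"
    using gen_time_gen_C5_le_101[of w i] by (cases "gen_time (gen_C5 w) L") auto
qed

lemma gen_time_ge_101:
  assumes "{1..100} \<subseteq> L" and "G [1..100] \<notin> L - {1..100}"
  shows "101 \<le> gen_time (G :: int list \<Rightarrow> int) L"
proof -
  have "set [1..100::int] = {1..100}" by simp
  moreover have "[1..100::int] \<noteq> []" by simp
  ultimately have "enat (Suc (card {1..100::int})) \<le> gen_time G L"
    using assms card_less_gen_time_if_fails_on[of L "[1..100]" G] by simp
  then show ?thesis by (simp add: numeral_eq_enat)
qed

lemma gen_time_gen_C5_le_gen_time:
  assumes "max (G [1..100]) 100 < w" and "L \<in> C5"
  shows "gen_time (gen_C5 w) L \<le> gen_time G L"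
proof -
  obtain i where L: "L = {1..100} \<union> {i..}"
    using \<open>L \<in> C5\<close> unfolding C5_def by blast
  show ?thesis
  proof (cases "G [1..100] \<in> L - {1..100}")
    case True
    then have "i \<le> w" using assms(1) unfolding L by auto
    with assms(1) show ?thesis
      unfolding L by (simp add: gen_time_gen_C5_eq_0)
  next
    case False
    then have "101 \<le> gen_time G L"
      by (intro gen_time_ge_101) (simp_all add: L)
    with gen_time_gen_C5_le_101 show ?thesis
      unfolding L by (rule order_trans)
  qed
qed

lemma gen_time_gen_C5_less_gen_time:
  assumes "max (G [1..100]) 100 < w"
  shows "gen_time (gen_C5 w) ({1..100} \<union> {w..}) < gen_time G ({1..100} \<union> {w..})"
proof -
  have "101 \<le> gen_time G ({1..100} \<union> {w..})"
    using assms by (intro gen_time_ge_101) auto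
  moreover have "gen_time (gen_C5 w) ({1..100} \<union> {w..}) = 0"
    using assms by (intro gen_time_gen_C5_eq_0) auto
  ultimately show ?thesis by auto
qed

theorem mainTheorem5:
  shows "\<not> (\<exists>G :: int list \<Rightarrow> int. nonuniform_generates C5 G \<and> pareto_optimal C5 (gen_time G))"
proof
  assume "\<exists>G :: int list \<Rightarrow> int. nonuniform_generates C5 G \<and> pareto_optimal C5 (gen_time G)"
  then obtain G :: "int list \<Rightarrow> int" where "pareto_optimal C5 (gen_time G)" by blast
  define w where "w = max (G [1..100]) 100 + 1"
  then have w: "max (G [1..100]) 100 < w" by simp
  have Lw: "{1..100} \<union> {w..} \<in> C5"
    unfolding C5_def by blast
  have "\<not> pareto_optimal C5 (gen_time G)"
    by (rule not_pareto_optimal_if_strictly_dominated[where tt = "gen_time G",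
          OF nonuniform_generates_gen_C5 gen_time_gen_C5_le_gen_time[of G, OF w] Lw
          gen_time_gen_C5_less_gen_time[of G, OF w]])
  then show False
    using \<open>pareto_optimal C5 (gen_time G)\<close> by contradiction
qed

end
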